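(* Let $\mathcal P=\langle F,R\rangle$ be a program and $H$ an interpretation (hypothesis). If $H_1$ and $H_2$ are interpretations with $H_1\le H$, $H_2\le H$, and both $H_1$ and $H_2$ are sound with respect to $\mathcal P$, then $H_1\oplus H_2$ is sound with respect to $\mathcal P$.
   Context: Let $\langle \mathcal{B},\le_t,\le_k\rangle$ be a complete, infinitely distributive bilattice with negation satisfying the infinitary interlacing conditions; $\wedge,\vee$ are meet/join for $\le_t$, $\otimes,\oplus$ meet/join for $\le_k$, $\mathcal U$ is the bottom of $\le_k$. A closed formula is built from ground literals and elements of $\mathcal B$ using $\wedge,\vee,\otimes,\oplus,\exists,\forall$ (quantifiers over closed terms). A program $\mathcal P=\langle F,R\rangle$ consists of a function $F$ from the Herbrand base $\mathcal{HB}_{\mathcal P}$ to $\mathcal B$ (the facts) and a finite set $R$ of ground clauses $A\leftarrow B$ ($A$ a ground atom, $B$ a closed formula), each ground atom being the head of at most one clause; $Head(\mathcal P)$ is the set of heads. An interpretation is a function $I:\mathcal{HB}_{\mathcal P}\to\mathcal B$, extended to closed formulas homomorphically ($I(\neg A)=\neg I(A)$, $I(X\wedge Y)=I(X)\wedge I(Y)$ etc., $\exists$ as $\bigvee$ and $\forall$ as $\bigwedge$ over closed instances). Operations on interpretations are pointwise, e.g. $(I\oplus J)(A)=I(A)\oplus J(A)$. $I,J$ are compatible if for every $A$, $I(A)\neq\mathcal U$ and $J(A)\neq\mathcal U$ imply $I(A)=J(A)$. $I\le J$ means: $I(A)\neq\mathcal U$ implies $I(A)=J(A)$ for all $A$.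 The restriction $I_{/S}$ to a set $S$ of atoms is $I$ on $S$ and $\mathcal U$ elsewhere. For a closed formula $B$, $B\equiv_I\alpha$ means $J(B)=\alpha$ for all $J$ with $I\le J$. The immediate consequence operator is $T_R(I)(A)=\alpha$ if there is a clause $A\leftarrow B$ in $R$ with $B\equiv_I\alpha$, and $T_R(I)(A)=\mathcal U$ otherwise. An interpretation $H$ is sound with respect to $\mathcal P$ if $F$ and $H$ are compatible and $H_{/Head(\mathcal P)}\le T_R(F\oplus H)$. *)

theory Defs
  imports Main
begin

record 'v bilat =
  le_t :: "'v \<Rightarrow> 'v \<Rightarrow> bool"
  le_k :: "'v \<Rightarrow> 'v \<Rightarrow> bool"
  bneg :: "'v \<Rightarrow> 'v"

definition is_lub :: "('v \<Rightarrow> 'v \<Rightarrow> bool) \<Rightarrow> 'v set \<Rightarrow> 'v \<Rightarrow> bool" where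
  "is_lub le S x \<longleftrightarrow> (\<forall>s\<in>S. le s x) \<and> (\<forall>y. (\<forall>s\<in>S. le s y) \<longrightarrow> le x y)"

definition is_glb :: "('v \<Rightarrow> 'v \<Rightarrow> bool) \<Rightarrow> 'v set \<Rightarrow> 'v \<Rightarrow> bool" where
  "is_glb le S x \<longleftrightarrow> (\<forall>s\<in>S. le x s) \<and> (\<forall>y. (\<forall>s\<in>S. le y s) \<longrightarrow> le y x)"

definition partial_order_on_type :: "('v \<Rightarrow> 'v \<Rightarrow> bool) \<Rightarrow> bool" where
  "partial_order_on_type le \<longleftrightarrow> (\<forall>x. le x x) \<and> (\<forall>x y. le x y \<and> le y x \<longrightarrow> x = y)
     \<and> (\<forall>x y z. le x y \<and> le y z \<longrightarrow> le x z)"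

definition Meet_t :: "'v bilat \<Rightarrow> 'v set \<Rightarrow> 'v" where
  "Meet_t L S = (THE x. is_glb (le_t L) S x)"
definition Join_t :: "'v bilat \<Rightarrow> 'v set \<Rightarrow> 'v" where
  "Join_t L S = (THE x. is_lub (le_t L) S x)"
definition Meet_k :: "'v bilat \<Rightarrow> 'v set \<Rightarrow> 'v" where
  "Meet_k L S = (THE x. is_glb (le_k L) S x)"
definition Join_k :: "'v bilat \<Rightarrow> 'v set \<Rightarrow> 'v" where
  "Join_k L S = (THE x. is_lub (le_k L) S x)"

definition meet_t :: "'v bilat \<Rightarrow> 'v \<Rightarrow> 'v \<Rightarrow> 'v" where "meet_t L x y = Meet_t L {x, y}"
definition join_t :: "'v bilat \<Rightarrow> 'v \<Rightarrow> 'v \<Rightarrow> 'v" where "join_t L x y = Join_t L {x, y}"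
definition meet_k :: "'v bilat \<Rightarrow> 'v \<Rightarrow> 'v \<Rightarrow> 'v" where "meet_k L x y = Meet_k L {x, y}"
definition join_k :: "'v bilat \<Rightarrow> 'v \<Rightarrow> 'v \<Rightarrow> 'v" where "join_k L x y = Join_k L {x, y}"

definition bU :: "'v bilat \<Rightarrow> 'v" where "bU L = Join_k L {}"

definition bin_ops :: "'v bilat \<Rightarrow> ('v \<Rightarrow> 'v \<Rightarrow> 'v) list" where
  "bin_ops L = [meet_t L, join_t L, meet_k L, join_k L]"
definition inf_ops :: "'v bilat \<Rightarrow> ('v set \<Rightarrow> 'v) list" where
  "inf_ops L = [Meet_t L, Join_t L, Meet_k L, Join_k L]"

definition bilattice :: "'v bilat \<Rightarrow> bool" where
  "bilattice L \<longleftrightarrow>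
     \<comment> \<open>two complete lattice orders\<close>
     partial_order_on_type (le_t L) \<and> partial_order_on_type (le_k L) \<and>
     (\<forall>S. \<exists>x. is_lub (le_t L) S x) \<and> (\<forall>S. \<exists>x. is_glb (le_t L) S x) \<and>
     (\<forall>S. \<exists>x. is_lub (le_k L) S x) \<and> (\<forall>S. \<exists>x. is_glb (le_k L) S x) \<and>
     \<comment> \<open>negation\<close>
     (\<forall>x y. le_t L x y \<longrightarrow> le_t L (bneg L y) (bneg L x)) \<and>
     (\<forall>x y. le_k L x y \<longrightarrow> le_k L (bneg L x) (bneg L y)) \<and>
     (\<forall>x. bneg L (bneg L x) = x) \<and>
     \<comment> \<open>infinitary interlacing: each infinitary operation is monotone w.r.t. both
        orders (families are represented by sets of pairs (a_i, b_i))\<close>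
     (\<forall>Op\<in>set (inf_ops L). \<forall>P.
        ((\<forall>p\<in>P. le_t L (fst p) (snd p)) \<longrightarrow> le_t L (Op (fst ` P)) (Op (snd ` P))) \<and>
        ((\<forall>p\<in>P. le_k L (fst p) (snd p)) \<longrightarrow> le_k L (Op (fst ` P)) (Op (snd ` P)))) \<and>
     \<comment> \<open>infinite distributivity: every binary operation distributes over every other
        infinitary operation (for nonempty families)\<close>
     (\<forall>i<4. \<forall>j<4. i \<noteq> j \<longrightarrow> (\<forall>a S. S \<noteq> {} \<longrightarrow>
        (bin_ops L ! i) a ((inf_ops L ! j) S) = (inf_ops L ! j) ((\<lambda>s. (bin_ops L ! i) a s) ` S)))"

text \<open>Closed formulas over ground atoms \<open>'a\<close> (the Herbrand base), closed terms \<open>'t\<close>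
  and truth values \<open>'v\<close>. A quantified formula \<open>\<exists>x. B(x)\<close> is represented by the
  function mapping each closed term to the corresponding closed instance.\<close>
datatype ('a, 't, 'v) form =
    Pos 'a
  | Neg 'a
  | Val 'v
  | FAnd "('a, 't, 'v) form" "('a, 't, 'v) form"
  | FOr "('a, 't, 'v) form" "('a, 't, 'v) form"
  | FOtimes "('a, 't, 'v) form" "('a, 't, 'v) form"
  | FOplus "('a, 't, 'v) form" "('a, 't, 'v) form"
  | FEx "'t \<Rightarrow> ('a, 't, 'v) form"
  | FAll "'t \<Rightarrow> ('a, 't, 'v) form"

primrec eval :: "'v bilat \<Rightarrow> ('a \<Rightarrow> 'v) \<Rightarrow> ('a, 't, 'v) form \<Rightarrow> 'v" where
  "eval L I (Pos A) = I A"
| "eval L I (Neg A) = bneg L (I A)"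
| "eval L I (Val v) = v"
| "eval L I (FAnd X Y) = meet_t L (eval L I X) (eval L I Y)"
| "eval L I (FOr X Y) = join_t L (eval L I X) (eval L I Y)"
| "eval L I (FOtimes X Y) = meet_k L (eval L I X) (eval L I Y)"
| "eval L I (FOplus X Y) = join_k L (eval L I X) (eval L I Y)"
| "eval L I (FEx f) = Join_t L (range (\<lambda>t. eval L I (f t)))"
| "eval L I (FAll f) = Meet_t L (range (\<lambda>t. eval L I (f t)))"

text \<open>A program is a pair (F, R): facts F and a finite set of ground clauses (head, body),
  each ground atom being the head of at most one clause.\<close>
definition program :: "('a \<Rightarrow> 'v) \<times> ('a \<times> ('a, 't, 'v) form) set \<Rightarrow> bool" where
  "program P \<longleftrightarrow> finite (snd P) \<and>
     (\<forall>c1\<in>snd P. \<forall>c2\<in>snd P. fst c1 = fst c2 \<longrightarrow> c1 = c2)"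

definition Head :: "('a \<Rightarrow> 'v) \<times> ('a \<times> ('a, 't, 'v) form) set \<Rightarrow> 'a set" where
  "Head P = fst ` snd P"

definition oplus_i :: "'v bilat \<Rightarrow> ('a \<Rightarrow> 'v) \<Rightarrow> ('a \<Rightarrow> 'v) \<Rightarrow> ('a \<Rightarrow> 'v)" where
  "oplus_i L I J = (\<lambda>A. join_k L (I A) (J A))"

definition compatible :: "'v bilat \<Rightarrow> ('a \<Rightarrow> 'v) \<Rightarrow> ('a \<Rightarrow> 'v) \<Rightarrow> bool" where
  "compatible L I J \<longleftrightarrow> (\<forall>A. I A \<noteq> bU L \<and> J A \<noteq> bU L \<longrightarrow> I A = J A)"

definition le_interp :: "'v bilat \<Rightarrow> ('a \<Rightarrow> 'v) \<Rightarrow> ('a \<Rightarrow> 'v) \<Rightarrow> bool" where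
  "le_interp L I J \<longleftrightarrow> (\<forall>A. I A \<noteq> bU L \<longrightarrow> I A = J A)"

definition restrict :: "'v bilat \<Rightarrow> ('a \<Rightarrow> 'v) \<Rightarrow> 'a set \<Rightarrow> ('a \<Rightarrow> 'v)" where
  "restrict L I S = (\<lambda>A. if A \<in> S then I A else bU L)"

definition fequiv :: "'v bilat \<Rightarrow> ('a \<Rightarrow> 'v) \<Rightarrow> ('a, 't, 'v) form \<Rightarrow> 'v \<Rightarrow> bool" where
  "fequiv L I B \<alpha> \<longleftrightarrow> (\<forall>J. le_interp L I J \<longrightarrow> eval L J B = \<alpha>)"

definition T_R :: "'v bilat \<Rightarrow> ('a \<times> ('a, 't, 'v) form) set \<Rightarrow> ('a \<Rightarrow> 'v) \<Rightarrow> ('a \<Rightarrow> 'v)" where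
  "T_R L R I = (\<lambda>A. if (\<exists>B \<alpha>. (A, B) \<in> R \<and> fequiv L I B \<alpha>)
                     then (THE \<alpha>. \<exists>B. (A, B) \<in> R \<and> fequiv L I B \<alpha>)
                     else bU L)"

definition sound :: "'v bilat \<Rightarrow> ('a \<Rightarrow> 'v) \<times> ('a \<times> ('a, 't, 'v) form) set \<Rightarrow> ('a \<Rightarrow> 'v) \<Rightarrow> bool" where
  "sound L P H \<longleftrightarrow> compatible L (fst P) H \<and>
     le_interp L (restrict L H (Head P)) (T_R L (snd P) (oplus_i L (fst P) H))"

end

theory Submission
  imports Defs
begin

text \<open>Two interpretations below a common hypothesis agree wherever both are defined, so
  \<open>H\<^sub>1 \<oplus> H\<^sub>2\<close> takes the defined value of either one and extends both; for the same reason
  \<open>\<oplus>\<close> is a least upper bound for \<open>\<le>\<close> among interpretations with a common upper bound.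
  The operator \<open>T\<^sub>R\<close> is monotone for \<open>\<le>\<close>, because a body whose value is fixed by all
  extensions of \<open>I\<close> is fixed by all extensions of any extension of \<open>I\<close>. Hence each
  \<open>H\<^sub>i\<close> restricted to the heads lies below \<open>T\<^sub>R(F \<oplus> H\<^sub>i) \<le> T\<^sub>R(F \<oplus> (H\<^sub>1 \<oplus> H\<^sub>2))\<close>,
  and so does their join, which is the restriction of \<open>H\<^sub>1 \<oplus> H\<^sub>2\<close>.\<close>

lemma bilattice_le_k_order: "bilattice L \<Longrightarrow> partial_order_on_type (le_k L)"
  unfolding bilattice_def by (elim conjE)

lemma bilattice_ex_lub_k: "bilattice L \<Longrightarrow> \<exists>x. is_lub (le_k L) S x"
  unfolding bilattice_def by (elim conjE) (rule spec)

lemma le_k_refl: "bilattice L \<Longrightarrow> le_k L x x"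
  using bilattice_le_k_order[of L] unfolding partial_order_on_type_def by simp

lemma le_k_antisym:
  assumes "bilattice L" and "le_k L x y" and "le_k L y x"
  shows "x = y"
proof -
  have "\<forall>x y. le_k L x y \<and> le_k L y x \<longrightarrow> x = y"
    using bilattice_le_k_order[OF assms(1)] unfolding partial_order_on_type_def by (elim conjE)
  with assms(2,3) show ?thesis by blast
qed

lemma Join_k_eqI:
  assumes "bilattice L" and "is_lub (le_k L) S x"
  shows "Join_k L S = x"
  unfolding Join_k_def
proof (rule the_equality)
  show "is_lub (le_k L) S x" by fact
next
  fix y assume "is_lub (le_k L) S y"
  with assms(2) show "y = x"
    unfolding is_lub_def by (simp add: le_k_antisym[OF assms(1)])
qed

lemma bU_least:
  assumes "bilattice L"
  shows "le_k L (bU L) x"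
proof -
  obtain u where u: "is_lub (le_k L) {} u"
    using bilattice_ex_lub_k[OF assms] by blast
  then have "bU L = u"
    unfolding bU_def by (rule Join_k_eqI[OF assms])
  with u show ?thesis unfolding is_lub_def by simp
qed

lemma join_k_commute: "join_k L a b = join_k L b a"
  unfolding join_k_def by (simp add: insert_commute)

lemma join_k_absorb2:
  assumes "bilattice L" and "le_k L a b"
  shows "join_k L a b = b"
proof -
  have "is_lub (le_k L) {a, b} b"
    using assms(2) le_k_refl[OF assms(1)] unfolding is_lub_def by simp
  then show ?thesis unfolding join_k_def by (rule Join_k_eqI[OF assms(1)])
qed

lemma join_k_idem: "bilattice L \<Longrightarrow> join_k L a a = a"
  by (simp add: join_k_absorb2 le_k_refl)

lemma join_k_bU_left: "bilattice L \<Longrightarrow> join_k L (bU L) b = b"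
  by (simp add: join_k_absorb2 bU_least)

lemma join_k_bU_right: "bilattice L \<Longrightarrow> join_k L a (bU L) = a"
  by (metis join_k_commute join_k_bU_left)

lemma oplus_i_commute: "oplus_i L I J = oplus_i L J I"
  unfolding oplus_i_def by (simp add: join_k_commute)

lemma compatibleD:
  "compatible L I J \<Longrightarrow> I A \<noteq> bU L \<Longrightarrow> J A \<noteq> bU L \<Longrightarrow> I A = J A"
  unfolding compatible_def by (drule spec[of _ A]) simp

lemma oplus_i_compatible_eq:
  assumes "bilattice L" and "compatible L I J"
  shows "oplus_i L I J A = (if I A = bU L then J A else I A)"
proof (cases "I A = bU L")
  case True
  then show ?thesis by (simp add: oplus_i_def join_k_bU_left[OF assms(1)])
next
  case False
  then consider "J A = bU L" | "J A = I A"
    using compatibleD[OF assms(2)] by metis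
  then show ?thesis
    using False by cases (simp_all add: oplus_i_def join_k_bU_right[OF assms(1)] join_k_idem[OF assms(1)])
qed

lemma le_interpD: "le_interp L I J \<Longrightarrow> I A \<noteq> bU L \<Longrightarrow> J A = I A"
  unfolding le_interp_def by (drule spec[of _ A]) simp

lemma le_interp_refl: "le_interp L I I"
  unfolding le_interp_def by simp

lemma le_interp_trans: "le_interp L I J \<Longrightarrow> le_interp L J K \<Longrightarrow> le_interp L I K"
  unfolding le_interp_def by fastforce

lemma compatible_if_le_interp_common:
  "le_interp L I K \<Longrightarrow> le_interp L J K \<Longrightarrow> compatible L I J"
  unfolding compatible_def by (metis le_interpD)

lemma compatible_sym: "compatible L I J \<Longrightarrow> compatible L J I"
  unfolding compatible_def by metis

lemma le_interp_oplus_left: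
  "bilattice L \<Longrightarrow> compatible L I J \<Longrightarrow> le_interp L I (oplus_i L I J)"
  unfolding le_interp_def by (simp add: oplus_i_compatible_eq)

lemma le_interp_oplus_right:
  "bilattice L \<Longrightarrow> compatible L I J \<Longrightarrow> le_interp L J (oplus_i L I J)"
  by (metis oplus_i_commute compatible_sym le_interp_oplus_left)

lemma oplus_i_least:
  assumes "bilattice L" and "le_interp L I K" and "le_interp L J K"
  shows "le_interp L (oplus_i L I J) K"
  unfolding le_interp_def
proof (intro allI impI)
  fix A assume defined: "oplus_i L I J A \<noteq> bU L"
  have eq: "oplus_i L I J A = (if I A = bU L then J A else I A)"
    using oplus_i_compatible_eq[OF assms(1) compatible_if_le_interp_common[OF assms(2,3)]] .
  show "oplus_i L I J A = K A"
  proof (cases "I A = bU L")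
    case True
    with defined eq have "J A \<noteq> bU L" by simp
    with True eq show ?thesis using le_interpD[OF assms(3)] by simp
  next
    case False
    with eq show ?thesis using le_interpD[OF assms(2)] by simp
  qed
qed

lemma compatible_oplus_i:
  assumes "bilattice L" and "compatible L F I" and "compatible L F J" and "compatible L I J"
  shows "compatible L F (oplus_i L I J)"
  unfolding compatible_def oplus_i_compatible_eq[OF assms(1,4)]
  using compatibleD[OF assms(2)] compatibleD[OF assms(3)] by simp

lemma oplus_i_mono_right:
  assumes "bilattice L" and "compatible L F J" and "le_interp L I J"
  shows "le_interp L (oplus_i L F I) (oplus_i L F J)"
  unfolding le_interp_def
proof (intro allI impI)
  have FI: "compatible L F I"
    unfolding compatible_def using compatibleD[OF assms(2)] le_interpD[OF assms(3)] by metis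
  fix A assume "oplus_i L F I A \<noteq> bU L"
  then show "oplus_i L F I A = oplus_i L F J A"
    using le_interpD[OF assms(3), of A]
    unfolding oplus_i_compatible_eq[OF assms(1) FI] oplus_i_compatible_eq[OF assms(1,2)]
    by (cases "F A = bU L") simp_all
qed

lemma restrict_oplus_i:
  "bilattice L \<Longrightarrow> restrict L (oplus_i L I J) S = oplus_i L (restrict L I S) (restrict L J S)"
  unfolding restrict_def oplus_i_def by (simp add: fun_eq_iff join_k_idem)

lemma fequiv_mono: "fequiv L I B \<alpha> \<Longrightarrow> le_interp L I J \<Longrightarrow> fequiv L J B \<alpha>"
  unfolding fequiv_def using le_interp_trans by blast

lemma fequiv_unique: "fequiv L I B \<alpha> \<Longrightarrow> fequiv L I B \<beta> \<Longrightarrow> \<alpha> = \<beta>"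
  unfolding fequiv_def using le_interp_refl by metis

lemma T_R_clause:
  assumes "program P" and "(A, B) \<in> snd P" and "fequiv L I B \<alpha>"
  shows "T_R L (snd P) I A = \<alpha>"
proof -
  have body_unique: "B' = B" if "(A, B') \<in> snd P" for B'
    using assms(1,2) that unfolding program_def by fastforce
  have "(THE \<alpha>. \<exists>B. (A, B) \<in> snd P \<and> fequiv L I B \<alpha>) = \<alpha>"
  proof (rule the_equality)
    show "\<exists>B. (A, B) \<in> snd P \<and> fequiv L I B \<alpha>" using assms(2,3) by blast
  next
    fix \<beta> assume "\<exists>B'. (A, B') \<in> snd P \<and> fequiv L I B' \<beta>"
    with body_unique have "fequiv L I B \<beta>" by blast
    then show "\<beta> = \<alpha>" using assms(3) by (rule fequiv_unique)
  qed
  with assms(2,3) show ?thesis unfolding T_R_def by auto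
qed

lemma T_R_mono:
  assumes "program P" and "le_interp L I J"
  shows "le_interp L (T_R L (snd P) I) (T_R L (snd P) J)"
  unfolding le_interp_def
proof (intro allI impI)
  fix A assume "T_R L (snd P) I A \<noteq> bU L"
  then obtain B \<alpha> where clause: "(A, B) \<in> snd P" and determined: "fequiv L I B \<alpha>"
    unfolding T_R_def by (auto split: if_splits)
  have "T_R L (snd P) I A = \<alpha>" using T_R_clause[OF assms(1) clause determined] .
  moreover have "T_R L (snd P) J A = \<alpha>"
    using T_R_clause[OF assms(1) clause fequiv_mono[OF determined assms(2)]] .
  ultimately show "T_R L (snd P) I A = T_R L (snd P) J A" by simp
qed

theorem mainTheorem2:
  fixes L :: "'v bilat"
    and P :: "('a \<Rightarrow> 'v) \<times> ('a \<times> ('a, 't, 'v) form) set"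
    and H H1 H2 :: "'a \<Rightarrow> 'v"
  assumes "bilattice L"
    and "program P"
    and "le_interp L H1 H"
    and "le_interp L H2 H"
    and "sound L P H1"
    and "sound L P H2"
  shows "sound L P (oplus_i L H1 H2)"
proof -
  let ?H = "oplus_i L H1 H2"
  let ?T = "T_R L (snd P) (oplus_i L (fst P) ?H)"
  have H12: "compatible L H1 H2" using assms(3,4) by (rule compatible_if_le_interp_common)
  have F1: "compatible L (fst P) H1" and F2: "compatible L (fst P) H2"
    using assms(5,6) unfolding sound_def by blast+
  have F12: "compatible L (fst P) ?H" using compatible_oplus_i[OF assms(1) F1 F2 H12] .
  have below_T: "le_interp L (restrict L Hi (Head P)) ?T"
    if "sound L P Hi" and "le_interp L Hi ?H" for Hi
    using that le_interp_trans T_R_mono[OF assms(2) oplus_i_mono_right[OF assms(1) F12]]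
    unfolding sound_def by blast
  have "le_interp L (restrict L ?H (Head P)) ?T"
    unfolding restrict_oplus_i[OF assms(1)]
    using oplus_i_least[OF assms(1)] below_T assms(5,6)
      le_interp_oplus_left[OF assms(1) H12] le_interp_oplus_right[OF assms(1) H12] by blast
  with F12 show ?thesis unfolding sound_def by blast
qed

end
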